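(* Let $q\in\mathbb{N}$, let $\psi$ be a primitive Dirichlet character mod $q_0$ with $q_0\mid q$, and let $f$ be a $q$-periodic arithmetical function with $f\in E_{q,\psi}$. Then $$f(n)=\sum_{d\mid\frac q{q_0}}g(d)\,\tau\big(n,\overline{\psi_{q/d}}\big),\qquad n=1,2,\dots,$$ where $g=\mathcal{T}f$.
   Context: A Dirichlet character mod $m$ is a completely multiplicative $m$-periodic function with $\chi(n)\ne0$ iff $\gcd(n,m)=1$; primitive means not induced (in the sense $\chi=\psi'\chi_m$, $\chi_m$ principal) by a character of modulus a proper divisor. $\psi_{q/d}=\psi\chi_{q/d}$ is the character mod $\frac qd$ induced by $\psi$. For a character $\chi$ mod $m$, the Gauss sum is $\tau(n,\chi)=\sum_{k=1}^m\chi(k)e^{2\pi ikn/m}$. For $d\mid q$ and a character $\chi$ mod $\frac qd$, $\xi_\chi(n)=\chi(\frac nd)$ if $d\mid n$, $0$ otherwise; $E_{q,\psi}$ is the span of $\{\xi_{\psi_{q/d}}:d\mid\frac q{q_0}\}$. For $q$-periodic $f$, $(\mathcal{T}f)(m)=\frac1q\sum_{n=1}^qe^{-2\pi imn/q}f(n)$. *)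

theory Defs
  imports "HOL-Analysis.Analysis"
begin

text \<open>Arithmetical functions are modelled as nat \<Rightarrow> complex; only arguments n \<ge> 1 matter.\<close>

definition dirichlet_char :: "nat \<Rightarrow> (nat \<Rightarrow> complex) \<Rightarrow> bool" where
  "dirichlet_char m chi \<longleftrightarrow> m > 0 \<and>
     (\<forall>a b. chi (a * b) = chi a * chi b) \<and> chi 1 = 1 \<and>
     (\<forall>n. chi (n + m) = chi n) \<and>
     (\<forall>n. chi n \<noteq> 0 \<longleftrightarrow> coprime n m)"

definition principal_char :: "nat \<Rightarrow> nat \<Rightarrow> complex" where
  "principal_char m n = (if coprime n m then 1 else 0)"

definition induced_char :: "nat \<Rightarrow> (nat \<Rightarrow> complex) \<Rightarrow> nat \<Rightarrow> complex" where
  "induced_char m \<psi> n = \<psi> n * principal_char m n"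

definition primitive_char :: "nat \<Rightarrow> (nat \<Rightarrow> complex) \<Rightarrow> bool" where
  "primitive_char m chi \<longleftrightarrow> dirichlet_char m chi \<and>
     \<not> (\<exists>d \<psi>'. d dvd m \<and> d < m \<and> dirichlet_char d \<psi>' \<and> chi = induced_char m \<psi>')"

definition gauss_sum :: "nat \<Rightarrow> nat \<Rightarrow> (nat \<Rightarrow> complex) \<Rightarrow> complex" where
  "gauss_sum m n chi = (\<Sum>k=1..m. chi k * exp (2 * of_real pi * \<i> * of_nat k * of_nat n / of_nat m))"

definition xi :: "nat \<Rightarrow> (nat \<Rightarrow> complex) \<Rightarrow> nat \<Rightarrow> complex" where
  "xi d chi n = (if d dvd n then chi (n div d) else 0)"

definition in_E :: "nat \<Rightarrow> nat \<Rightarrow> (nat \<Rightarrow> complex) \<Rightarrow> (nat \<Rightarrow> complex) \<Rightarrow> bool" where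
  "in_E q q0 \<psi> f \<longleftrightarrow> (\<exists>c :: nat \<Rightarrow> complex. \<forall>n\<ge>1.
      f n = (\<Sum>d | d dvd (q div q0). c d * xi d (induced_char (q div d) \<psi>) n))"

definition finite_fourier :: "nat \<Rightarrow> (nat \<Rightarrow> complex) \<Rightarrow> nat \<Rightarrow> complex" where
  "finite_fourier q f m = (1 / of_nat q) *
     (\<Sum>n=1..q. exp (- 2 * of_real pi * \<i> * of_nat m * of_nat n / of_nat q) * f n)"

end

theory Submission
  imports Defs "HOL-Number_Theory.Number_Theory"
begin

text \<open>Let g = T f. Finite Fourier inversion expands f(n) as the sum of g(m) e(mn/q) over
  1 <= m <= q. Every f in E_{q,psi} satisfies f(kn) = psi(k) f(n) for k coprime to q, and
  substituting n -> kn in the sum defining g turns this into psi(k) g(km) = g(m). Group the m by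
  d = gcd(m, q), so that m = kd with k a totative of q/d. If q0 does not divide q/d, primitivity
  of psi provides k = 1 (mod q/d), coprime to q, with psi(k) <> 1; then km = m (mod q), so
  g(m) = psi(k) g(m) forces g(m) = 0. If q0 divides q/d, then g(kd) = cnj(psi(k)) g(d), and the
  sum over k is g(d) tau(n, cnj psi_{q/d}).

  Primitivity enters only through this: if psi is trivial on the units mod q0 that are 1 mod s,
  for some s dividing q0, then psi is induced by a character mod s, hence s = q0.\<close>

section \<open>Additive characters and finite Fourier inversion\<close>

definition unit_root :: "nat \<Rightarrow> int \<Rightarrow> complex" where
  "unit_root q x = exp (2 * of_real pi * \<i> * of_int x / of_nat q)"

lemma unit_root_0 [simp]: "unit_root q 0 = 1"
  by (simp add: unit_root_def)

lemma unit_root_add: "unit_root q (x + y) = unit_root q x * unit_root q y"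
  by (simp add: unit_root_def distrib_left add_divide_distrib exp_add)

lemma unit_root_mult_nat: "unit_root q (int m * x) = unit_root q x ^ m"
  by (induction m) (simp_all add: distrib_right unit_root_add)

lemma unit_root_eq_1_iff:
  assumes "q > 0"
  shows "unit_root q x = 1 \<longleftrightarrow> int q dvd x"
proof
  assume "unit_root q x = 1"
  then obtain k :: int where "2 * pi * x / q = 2 * k * pi"
    by (auto simp: unit_root_def exp_eq_1)
  then have "real_of_int x = real_of_int (k * int q)"
    using assms by (simp add: field_simps)
  then show "int q dvd x"
    by (simp only: of_int_eq_iff) simp
next
  assume "int q dvd x"
  then obtain k where "x = int q * k" ..
  then have "2 * of_real pi * \<i> * of_int x / of_nat q = 2 * of_real pi * \<i> * of_int k"
    using assms by simp
  then show "unit_root q x = 1"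
    by (simp add: unit_root_def exp_eq_1)
qed

lemma unit_root_cong:
  assumes "q > 0" "[x = y] (mod int q)"
  shows "unit_root q x = unit_root q y"
proof -
  have "unit_root q (x - y) = 1"
    using assms by (simp add: unit_root_eq_1_iff cong_iff_dvd_diff)
  then show ?thesis
    using unit_root_add [of q "x - y" y] by simp
qed

lemma sum_unit_root:
  assumes "q > 0"
  shows "(\<Sum>m=1..q. unit_root q (int m * x)) = (if int q dvd x then of_nat q else 0)"
proof -
  have "unit_root q x ^ q = 1"
    using assms by (simp add: unit_root_mult_nat [symmetric] unit_root_eq_1_iff)
  then show ?thesis
    using assms by (simp add: unit_root_mult_nat sum_gp unit_root_eq_1_iff)
qed

text \<open>Residues are represented in {1..q} rather than {0..<q}, because arithmetical functions
  are only specified at arguments n >= 1.\<close>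

definition pos_mod :: "nat \<Rightarrow> nat \<Rightarrow> nat" where
  "pos_mod q n = (if n mod q = 0 then q else n mod q)"

lemma pos_mod_in: "q > 0 \<Longrightarrow> pos_mod q n \<in> {1..q}"
  by (auto simp: pos_mod_def less_imp_le)

lemma cong_pos_mod: "[pos_mod q n = n] (mod q)"
  by (auto simp: pos_mod_def cong_def)

lemma pos_mod_eq_iff: "j \<in> {1..q} \<Longrightarrow> pos_mod q n = j \<longleftrightarrow> [j = n] (mod q)"
  by (cases "j = q") (auto simp: pos_mod_def cong_def, metis less_irrefl mod_less_divisor)

lemma periodic_pos_mod:
  assumes "q > 0" "\<forall>n\<ge>1. f (n + q) = f n" "n \<ge> 1"
  shows "f (pos_mod q n) = f n"
  using assms(3)
proof (induction n rule: less_induct)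
  case (less n)
  show ?case
  proof (cases "n \<le> q")
    case True
    with less.prems have "pos_mod q n = n"
      by (simp add: pos_mod_eq_iff)
    then show ?thesis by simp
  next
    case False
    then have "pos_mod q n = pos_mod q (n - q)"
      by (simp add: pos_mod_def le_mod_geq)
    also have "f \<dots> = f (n - q)"
      using less.IH[of "n - q"] False assms(1) by simp
    also have "\<dots> = f n"
      using assms(2) [rule_format, of "n - q"] False by simp
    finally show ?thesis .
  qed
qed

lemma bij_betw_pos_mod_mult:
  assumes "q > 0" "coprime k q"
  shows "bij_betw (\<lambda>n. pos_mod q (k * n)) {1..q} {1..q}"
proof -
  have "inj_on (\<lambda>n. pos_mod q (k * n)) {1..q}"
  proof
    fix x y assume x: "x \<in> {1..q}" and y: "y \<in> {1..q}"
      and "pos_mod q (k * x) = pos_mod q (k * y)"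
    then have "[k * x = k * y] (mod q)"
      by (metis cong_pos_mod cong_sym cong_trans)
    then have "[y = x] (mod q)"
      using assms(2) by (simp add: cong_mult_lcancel_nat cong_sym)
    then show "x = y"
      using pos_mod_eq_iff [OF x, of x] pos_mod_eq_iff [OF y, of x] by (simp add: cong_refl)
  qed
  moreover have "(\<lambda>n. pos_mod q (k * n)) ` {1..q} \<subseteq> {1..q}"
    using pos_mod_in [OF assms(1)] by auto
  ultimately show ?thesis
    by (simp add: bij_betw_def endo_inj_surj)
qed

lemma finite_fourier_unit_root:
  "finite_fourier q f m = (\<Sum>j=1..q. unit_root q (- (int m * int j)) * f j) / of_nat q"
  unfolding finite_fourier_def unit_root_def
  by (simp add: sum_divide_distrib algebra_simps)

lemma finite_fourier_cong:
  assumes "q > 0" "[a = b] (mod q)"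
  shows "finite_fourier q f a = finite_fourier q f b"
proof -
  have "[- (int a * int j) = - (int b * int j)] (mod int q)" for j
    using assms(2) by (intro cong_minus_minus_iff[THEN iffD2] cong_mult cong_refl)
      (simp add: cong_int_iff)
  then show ?thesis
    using assms(1) unfolding finite_fourier_unit_root
    by (metis (no_types, lifting) unit_root_cong sum.cong)
qed

lemma finite_fourier_inversion:
  assumes q: "q > 0" and per: "\<forall>n\<ge>1. f (n + q) = f n" and n: "n \<ge> 1"
  shows "f n = (\<Sum>m=1..q. finite_fourier q f m * unit_root q (int m * int n))"
proof -
  have orth: "(\<Sum>m=1..q. unit_root q (int m * (int n - int j))) / of_nat q =
      (if pos_mod q n = j then 1 else 0)" if "j \<in> {1..q}" for j
  proof -
    have "int q dvd (int n - int j) \<longleftrightarrow> pos_mod q n = j"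
      by (simp add: pos_mod_eq_iff [OF that] cong_int_iff [symmetric] cong_iff_dvd_diff
          dvd_diff_commute)
    then show ?thesis
      using q sum_unit_root [OF q, of "int n - int j"] by simp
  qed
  have "(\<Sum>m=1..q. finite_fourier q f m * unit_root q (int m * int n)) =
      (\<Sum>j=1..q. f j * ((\<Sum>m=1..q. unit_root q (int m * (int n - int j))) / of_nat q))"
    unfolding finite_fourier_unit_root sum_divide_distrib sum_distrib_left sum_distrib_right
    by (subst sum.swap) (simp add: unit_root_add [symmetric] algebra_simps)
  also have "\<dots> = (\<Sum>j=1..q. if pos_mod q n = j then f j else 0)"
    by (rule sum.cong [OF refl]) (simp only: orth, simp)
  also have "\<dots> = f (pos_mod q n)"
    using pos_mod_in [OF q] by (simp add: sum.delta')
  also have "\<dots> = f n"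
    using periodic_pos_mod [OF q per n] .
  finally show ?thesis ..
qed

lemma finite_fourier_dilation:
  assumes q: "q > 0" and per: "\<forall>n\<ge>1. f (n + q) = f n"
    and k: "coprime k q" "k > 0" and dil: "\<forall>n\<ge>1. f (k * n) = c * f n"
  shows "c * finite_fourier q f (k * m) = finite_fourier q f m"
proof -
  have "(\<Sum>j=1..q. unit_root q (- (int m * int j)) * f j) =
        (\<Sum>j=1..q. unit_root q (- (int m * int (pos_mod q (k * j)))) * f (pos_mod q (k * j)))"
    by (rule sum.reindex_bij_betw [OF bij_betw_pos_mod_mult [OF q k(1)], symmetric])
  also have "\<dots> = (\<Sum>j=1..q. unit_root q (- (int m * int (k * j))) * f (k * j))"
  proof (intro sum.cong refl)
    fix j assume "j \<in> {1..q}"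
    then have "f (pos_mod q (k * j)) = f (k * j)"
      using periodic_pos_mod [OF q per, of "k * j"] k(2) by simp
    moreover have "[- (int m * int (pos_mod q (k * j))) = - (int m * int (k * j))] (mod int q)"
      using cong_int_iff [THEN iffD2, OF cong_pos_mod [of q "k * j"]]
      by (intro cong_minus_minus_iff [THEN iffD2] cong_mult cong_refl)
    ultimately show "unit_root q (- (int m * int (pos_mod q (k * j)))) * f (pos_mod q (k * j)) =
        unit_root q (- (int m * int (k * j))) * f (k * j)"
      using unit_root_cong [OF q] by simp
  qed
  also have "\<dots> = c * (\<Sum>j=1..q. unit_root q (- (int (k * m) * int j)) * f j)"
    unfolding sum_distrib_left using dil by (intro sum.cong refl) (simp add: algebra_simps)
  finally show ?thesis
    unfolding finite_fourier_unit_root by simp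
qed

section \<open>Dirichlet characters\<close>

lemma
  assumes "dirichlet_char m chi"
  shows dirichlet_char_modulus_pos: "m > 0"
    and dirichlet_char_mult: "chi (a * b) = chi a * chi b"
    and dirichlet_char_one: "chi 1 = 1"
    and dirichlet_char_eq_0_iff: "chi n = 0 \<longleftrightarrow> \<not> coprime n m"
  using assms unfolding dirichlet_char_def by auto

lemma dirichlet_char_mod:
  assumes "dirichlet_char m chi"
  shows "chi (n mod m) = chi n"
proof -
  have "chi (r + m * t) = chi r" for r t
  proof (induction t)
    case (Suc t)
    have "r + m * Suc t = (r + m * t) + m"
      by simp
    then show ?case
      using assms Suc unfolding dirichlet_char_def by metis
  qed simp
  from this [of "n mod m" "n div m"] show ?thesis
    by simp
qed

lemma dirichlet_char_cong:
  assumes "dirichlet_char m chi" "[a = b] (mod m)"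
  shows "chi a = chi b"
  using assms by (metis cong_def dirichlet_char_mod)

lemma norm_dirichlet_char:
  assumes "dirichlet_char m chi" "coprime k m"
  shows "norm (chi k) = 1"
proof -
  have "chi (k ^ j) = chi k ^ j" for j
    by (induction j)
      (metis power_0 dirichlet_char_one [OF assms(1)], simp add: dirichlet_char_mult [OF assms(1)])
  then have "chi k ^ totient m = 1"
    using dirichlet_char_cong [OF assms(1) euler_theorem [OF assms(2)]] dirichlet_char_one [OF assms(1)]
    by simp
  then have "norm (chi k) ^ totient m = 1"
    by (metis norm_one norm_power)
  moreover have "totient m > 0"
    using dirichlet_char_modulus_pos [OF assms(1)] by simp
  ultimately show ?thesis
    using power_eq_imp_eq_base [of "norm (chi k)" "totient m" 1] by simp
qed

lemma cnj_dirichlet_char: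
  assumes "dirichlet_char m chi" "coprime k m"
  shows "cnj (chi k) = inverse (chi k)"
proof -
  have "chi k * cnj (chi k) = 1"
    using norm_dirichlet_char [OF assms] complex_norm_square [of "chi k"] by simp
  then show ?thesis
    by (rule inverse_unique [symmetric])
qed

lemma exists_coprime_cong:
  fixes a L M :: nat
  assumes "coprime a L" "L dvd M" "M > 0"
  shows "\<exists>c>0. [c = a] (mod L) \<and> coprime c M"
proof -
  define P where "P = {p \<in> prime_factors M. \<not> p dvd a}"
  define c where "c = a + L * \<Prod>P"
  have "finite P"
    by (simp add: P_def)
  have "L > 0" "\<Prod>P > 0"
    using assms by (auto simp: P_def in_prime_factors_iff prime_gt_0_nat intro!: prod_pos)
  then have "c > 0"
    by (simp add: c_def)
  moreover have "[c = a] (mod L)"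
    by (simp add: c_def cong_def)
  moreover have "coprime c M"
  proof (rule ccontr)
    assume "\<not> coprime c M"
    then have "gcd c M \<noteq> 1"
      using coprime_iff_gcd_eq_1 by blast
    then obtain p :: nat where "prime p" "p dvd gcd c M"
      using prime_factor_nat by blast
    then have p: "prime p" "p dvd c" "p dvd M"
      by auto
    show False
    proof (cases "p dvd a")
      case True
      then have "p dvd L * \<Prod>P"
        using p(2) by (simp add: c_def dvd_add_right_iff)
      moreover have "\<not> p dvd \<Prod>P"
        using \<open>finite P\<close> True p(1)
        by (auto simp: prime_dvd_prod_iff P_def in_prime_factors_iff dest: primes_dvd_imp_eq)
      ultimately have "p dvd L"
        using p(1) prime_dvd_mult_iff by blast
      then show False
        using True p(1) assms(1) by (metis coprime_common_divisor_nat not_prime_1)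
    next
      case False
      then have "p \<in> P"
        using p assms(3) by (simp add: P_def in_prime_factors_iff)
      then have "p dvd L * \<Prod>P"
        using \<open>finite P\<close> by (intro dvd_mult dvd_prodI)
      then show False
        using False p(2) by (simp add: c_def dvd_add_left_iff)
    qed
  qed
  ultimately show ?thesis
    by blast
qed

lemma cong_gcd_solvable_nat:
  fixes a b m n :: nat
  assumes "n > 0" "[a = b] (mod gcd m n)"
  shows "\<exists>x. [x = a] (mod m) \<and> [x = b] (mod n)"
proof -
  \<comment> \<open>d stands for b - a, shifted by n * a to avoid truncated subtraction\<close>
  define d where "d = b + (n - 1) * a"
  have "[d = a + (n - 1) * a] (mod gcd m n)"
    unfolding d_def using assms(2) by (intro cong_add cong_refl) (rule cong_sym)
  moreover have "a + (n - 1) * a = n * a"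
    using assms(1) by (cases n) simp_all
  ultimately have "[d = n * a] (mod gcd m n)"
    by simp
  then have "gcd m n dvd d"
    by (simp add: cong_dvd_iff)
  then obtain u where u: "[m * u = d] (mod n)"
    using cong_solve_dvd_nat by blast
  have "[a + m * u = b] (mod n)"
  proof -
    have "[a + m * u = a + d] (mod n)"
      using u by (rule cong_add [OF cong_refl])
    moreover have "a + d = b + n * a"
      using \<open>a + (n - 1) * a = n * a\<close> by (simp add: d_def)
    ultimately show ?thesis
      by (simp add: cong_def)
  qed
  moreover have "[a + m * u = a] (mod m)"
    by (simp add: cong_def)
  ultimately show ?thesis
    by blast
qed

text \<open>The choice made by SOME is immaterial when psi is trivial on the units that are
  1 mod s (see descended_char_eq).\<close>

definition descended_char :: "nat \<Rightarrow> nat \<Rightarrow> (nat \<Rightarrow> complex) \<Rightarrow> nat \<Rightarrow> complex" where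
  "descended_char s q0 \<psi> n =
     (if coprime n s then \<psi> (SOME c. [c = n] (mod s) \<and> coprime c q0) else 0)"

context
  fixes q0 s :: nat and \<psi> :: "nat \<Rightarrow> complex"
  assumes dc: "dirichlet_char q0 \<psi>" and s: "s dvd q0"
    and ker: "\<And>c. coprime c q0 \<Longrightarrow> [c = 1] (mod s) \<Longrightarrow> \<psi> c = 1"
begin

lemma dirichlet_char_cong_divisor:
  assumes a: "coprime a q0" and b: "coprime b q0" and ab: "[a = b] (mod s)"
  shows "\<psi> a = \<psi> b"
proof -
  obtain i where i: "[a * i = 1] (mod q0)"
    using cong_solve_coprime_nat [OF a] by auto
  then have "coprime i q0"
    using cong_imp_coprime [OF cong_sym [OF i]] by simp
  moreover have "[b * i = 1] (mod s)"
    using cong_trans [OF cong_scalar_right [OF cong_sym [OF ab]] cong_dvd_modulus_nat [OF i s]] .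
  ultimately have "\<psi> (b * i) = 1"
    using b ker by simp
  have "\<psi> b = \<psi> (b * (a * i))"
    using dirichlet_char_cong [OF dc cong_scalar_left [OF i, of b]] by simp
  also have "\<dots> = \<psi> (b * i) * \<psi> a"
    by (simp add: dirichlet_char_mult [OF dc, symmetric] mult_ac)
  finally show ?thesis
    using \<open>\<psi> (b * i) = 1\<close> by simp
qed

lemma exists_coprime_lift: "coprime n s \<Longrightarrow> \<exists>c. [c = n] (mod s) \<and> coprime c q0"
  using exists_coprime_cong [OF _ s dirichlet_char_modulus_pos [OF dc]] by blast

lemma descended_char_eq:
  assumes c: "coprime c q0" "[c = n] (mod s)"
  shows "descended_char s q0 \<psi> n = \<psi> c"
proof -
  have "coprime n s"
    using c coprime_cong_cong_left coprime_divisors [OF dvd_refl s] by blast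
  moreover from this have "\<exists>c. [c = n] (mod s) \<and> coprime c q0"
    by (rule exists_coprime_lift)
  ultimately show ?thesis
    unfolding descended_char_def using c someI_ex [of "\<lambda>c. [c = n] (mod s) \<and> coprime c q0"]
    by (auto intro: dirichlet_char_cong_divisor cong_trans cong_sym)
qed

lemma descended_char_eq_0_iff: "descended_char s q0 \<psi> n = 0 \<longleftrightarrow> \<not> coprime n s"
proof (cases "coprime n s")
  case True
  then obtain c where "[c = n] (mod s)" "coprime c q0"
    using exists_coprime_lift [OF True] by blast
  then show ?thesis
    using True descended_char_eq dirichlet_char_eq_0_iff [OF dc] by simp
qed (simp add: descended_char_def)

lemma dirichlet_char_descended_char: "dirichlet_char s (descended_char s q0 \<psi>)"
  unfolding dirichlet_char_def
proof (intro conjI allI)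
  show "s > 0"
    using s dirichlet_char_modulus_pos [OF dc] by (auto intro: gr0I)
next
  fix a b
  show "descended_char s q0 \<psi> (a * b) = descended_char s q0 \<psi> a * descended_char s q0 \<psi> b"
  proof (cases "coprime a s \<and> coprime b s")
    case True
    then obtain c d where "[c = a] (mod s)" "coprime c q0" "[d = b] (mod s)" "coprime d q0"
      using exists_coprime_lift by meson
    then show ?thesis
      using descended_char_eq [of "c * d" "a * b"]
      by (simp add: descended_char_eq cong_mult dirichlet_char_mult [OF dc])
  qed (auto simp: descended_char_def)
next
  show "descended_char s q0 \<psi> 1 = 1"
    using descended_char_eq [of 1 1] dirichlet_char_one [OF dc] by simp
next
  fix n
  have "coprime (n + s) s \<longleftrightarrow> coprime n s"
    by (metis gcd_add1 coprime_iff_gcd_eq_1)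
  then show "descended_char s q0 \<psi> (n + s) = descended_char s q0 \<psi> n"
  proof (cases "coprime n s")
    case True
    then obtain c where "[c = n] (mod s)" "coprime c q0"
      using exists_coprime_lift [OF True] by blast
    moreover from this have "[c = n + s] (mod s)"
      by (simp add: cong_def)
    ultimately show ?thesis
      by (simp add: descended_char_eq)
  qed (simp add: descended_char_def)
next
  fix n
  show "descended_char s q0 \<psi> n \<noteq> 0 \<longleftrightarrow> coprime n s"
    by (simp add: descended_char_eq_0_iff)
qed

lemma induced_descended_char: "induced_char q0 (descended_char s q0 \<psi>) = \<psi>"
proof
  fix n
  show "induced_char q0 (descended_char s q0 \<psi>) n = \<psi> n"
    using descended_char_eq [of n n] dirichlet_char_eq_0_iff [OF dc, of n]
    by (auto simp: induced_char_def principal_char_def)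
qed

end

lemma primitive_char_nontrivial_on_kernel:
  assumes "primitive_char q0 \<psi>" "s dvd q0" "s < q0"
  shows "\<exists>c. coprime c q0 \<and> [c = 1] (mod s) \<and> \<psi> c \<noteq> 1"
  using assms dirichlet_char_descended_char induced_descended_char
  unfolding primitive_char_def by metis

section \<open>Fourier coefficients of the functions in E_{q,psi}\<close>

lemma xi_induced_char_mult:
  assumes "dirichlet_char m \<psi>" "d dvd q" "coprime k q"
  shows "xi d (induced_char (q div d) \<psi>) (k * n) = \<psi> k * xi d (induced_char (q div d) \<psi>) n"
proof -
  have "coprime k (q div d * d)"
    using assms(2,3) by simp
  then have "coprime k (q div d)" "coprime d k"
    by (simp_all add: ac_simps)
  then have induced: "induced_char (q div d) \<psi> (k * x) = \<psi> k * induced_char (q div d) \<psi> x" for x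
    by (simp add: induced_char_def principal_char_def dirichlet_char_mult [OF assms(1)])
  show ?thesis
  proof (cases "d dvd n")
    case True
    then have "k * n div d = k * (n div d)"
      by (simp add: div_mult_swap)
    with True show ?thesis
      by (simp add: xi_def induced)
  next
    case False
    then show ?thesis
      using \<open>coprime d k\<close> by (simp add: xi_def coprime_dvd_mult_right_iff)
  qed
qed

lemma dvd_div_imp_dvd:
  fixes d q q0 :: nat
  shows "d dvd q div q0 \<Longrightarrow> q0 dvd q \<Longrightarrow> d dvd q"
  by (metis dvd_div_mult_self dvd_mult2)

lemma dvd_div_iff_dvd_div:
  fixes d q q0 :: nat
  assumes "q0 dvd q" "d dvd q"
  shows "d dvd q div q0 \<longleftrightarrow> q0 dvd q div d"
proof (cases "q = 0")
  case False
  then have "q0 \<noteq> 0" "d \<noteq> 0"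
    using assms by auto
  then show ?thesis
    using assms by (simp add: dvd_div_iff_mult mult.commute)
qed simp

lemma in_E_dilation:
  assumes dc: "dirichlet_char q0 \<psi>" and "q0 dvd q" and E: "in_E q q0 \<psi> f"
    and k: "coprime k q" "k > 0" and n: "n \<ge> 1"
  shows "f (k * n) = \<psi> k * f n"
proof -
  obtain c where c: "\<And>n. n \<ge> 1 \<Longrightarrow>
      f n = (\<Sum>d | d dvd q div q0. c d * xi d (induced_char (q div d) \<psi>) n)"
    using E unfolding in_E_def by blast
  have "d dvd q" if "d dvd q div q0" for d
    using that \<open>q0 dvd q\<close> by (rule dvd_div_imp_dvd)
  then have "f (k * n) = (\<Sum>d | d dvd q div q0. \<psi> k * (c d * xi d (induced_char (q div d) \<psi>) n))"
    using c [of "k * n"] k n by (simp add: xi_induced_char_mult [OF dc] mult.left_commute)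
  also have "\<dots> = \<psi> k * f n"
    using c [OF n] by (simp add: sum_distrib_left)
  finally show ?thesis .
qed

lemma primitive_char_nontrivial_on_cong_1:
  assumes pc: "primitive_char q0 \<psi>" and "t dvd M" "M > 0" "\<not> q0 dvd t"
  shows "\<exists>k>0. [k = 1] (mod t) \<and> coprime k M \<and> \<psi> k \<noteq> 1"
proof -
  have dc: "dirichlet_char q0 \<psi>"
    using pc by (simp add: primitive_char_def)
  then have "q0 > 0"
    by (rule dirichlet_char_modulus_pos)
  have "t > 0"
    using assms(2,3) by (auto intro: gr0I)
  have "gcd q0 t \<noteq> q0"
    using assms(4) by (metis gcd_dvd2)
  then have "gcd q0 t dvd q0" "gcd q0 t < q0"
    using \<open>q0 > 0\<close> by (simp_all add: le_neq_implies_less)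
  then obtain c where c: "coprime c q0" "[c = 1] (mod gcd q0 t)" "\<psi> c \<noteq> 1"
    using primitive_char_nontrivial_on_kernel [OF pc] by blast
  obtain x where x: "[x = c] (mod q0)" "[x = 1] (mod t)"
    using cong_gcd_solvable_nat [OF \<open>t > 0\<close> c(2)] by blast
  have "coprime x (q0 * t)"
    using cong_imp_coprime [OF cong_sym [OF x(1)] c(1)] cong_imp_coprime [OF cong_sym [OF x(2)]]
    by simp
  then obtain k where k: "k > 0" "[k = x] (mod q0 * t)" "coprime k (q0 * M)"
    using exists_coprime_cong [of x "q0 * t" "q0 * M"] assms(2,3) \<open>q0 > 0\<close> by auto
  have "\<psi> k \<noteq> 1"
    using dirichlet_char_cong [OF dc cong_trans [OF cong_modulus_mult_nat [OF k(2)] x(1)]] c(3)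
    by simp
  moreover have "[k = 1] (mod t)"
    using cong_trans [OF cong_modulus_mult_nat [OF k(2) [unfolded mult.commute [of q0]]] x(2)] .
  ultimately show ?thesis
    using k by auto
qed

lemma finite_fourier_eq_0_if_not_dvd:
  assumes q: "q > 0" and pc: "primitive_char q0 \<psi>"
    and per: "\<forall>n\<ge>1. f (n + q) = f n"
    and dil: "\<And>k n. coprime k q \<Longrightarrow> k > 0 \<Longrightarrow> n \<ge> 1 \<Longrightarrow>
      f (k * n) = \<psi> k * f n"
    and d: "d dvd q" "\<not> q0 dvd q div d" and "d dvd m"
  shows "finite_fourier q f m = 0"
proof -
  obtain k where k: "k > 0" "[k = 1] (mod q div d)" "coprime k q" "\<psi> k \<noteq> 1"
    using primitive_char_nontrivial_on_cong_1 [OF pc _ q d(2)] dvd_triv_left [of "q div d" d] d(1)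
    by auto
  obtain m' where m': "m = d * m'"
    using \<open>d dvd m\<close> ..
  have "[d * (k * m') = d * (1 * m')] (mod d * (q div d))"
    using k(2) by (intro cong_cmult_leftI cong_scalar_right)
  then have "finite_fourier q f (k * m) = finite_fourier q f m"
    using finite_fourier_cong [OF q] d(1) by (simp add: m' mult.left_commute)
  moreover have "\<psi> k * finite_fourier q f (k * m) = finite_fourier q f m"
    using k dil by (intro finite_fourier_dilation [OF q per]) auto
  ultimately have "(\<psi> k - 1) * finite_fourier q f m = 0"
    by (simp add: algebra_simps)
  then show ?thesis
    using \<open>\<psi> k \<noteq> 1\<close> by simp
qed

lemma finite_fourier_mult_coprime:
  assumes q: "q > 0" and dc: "dirichlet_char q0 \<psi>"
    and per: "\<forall>n\<ge>1. f (n + q) = f n"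
    and dil: "\<And>k n. coprime k q \<Longrightarrow> k > 0 \<Longrightarrow> n \<ge> 1 \<Longrightarrow>
      f (k * n) = \<psi> k * f n"
    and d: "d dvd q" "q0 dvd q div d" and k: "coprime k (q div d)"
  shows "finite_fourier q f (k * d) = cnj (\<psi> k) * finite_fourier q f d"
proof -
  obtain k' where k': "k' > 0" "[k' = k] (mod q div d)" "coprime k' q"
    using exists_coprime_cong [OF k _ q] dvd_triv_left [of "q div d" d] d(1) by auto
  have "[k' * d = k * d] (mod q)"
    using cong_cmult_rightI [OF k'(2), of d] d(1) by simp
  then have "finite_fourier q f (k * d) = finite_fourier q f (k' * d)"
    using finite_fourier_cong [OF q] by (metis cong_sym)
  moreover have "\<psi> k' * finite_fourier q f (k' * d) = finite_fourier q f d"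
    using k' dil by (intro finite_fourier_dilation [OF q per]) auto
  moreover have "\<psi> k' = \<psi> k"
    using dirichlet_char_cong [OF dc cong_dvd_modulus_nat [OF k'(2) d(2)]] .
  moreover have "coprime k q0"
    using k d(2) coprime_divisors [OF dvd_refl] by blast
  ultimately show ?thesis
    using dirichlet_char_eq_0_iff [OF dc, of k]
    by (simp add: cnj_dirichlet_char [OF dc] field_simps)
qed

lemma sum_atLeastAtMost_by_gcd:
  fixes G :: "nat \<Rightarrow> 'a :: comm_monoid_add"
  assumes "q > 0"
  shows "(\<Sum>m=1..q. G m) = (\<Sum>d | d dvd q. \<Sum>k\<in>totatives (q div d). G (k * d))"
proof -
  have "(\<Sum>d | d dvd q. \<Sum>k\<in>totatives (q div d). G (k * d)) =
      (\<Sum>d | d dvd q. \<Sum>m\<in>{k\<in>{0<..q}. gcd k q = d}. G m)"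
    using assms by (intro sum.cong refl sum.reindex_bij_betw bij_betw_totatives_gcd_eq) auto
  also have "\<dots> = sum G {0<..q}"
    by (rule sum.group) (use assms in auto)
  also have "{0<..q} = {1..q}"
    by auto
  finally show ?thesis ..
qed

lemma gauss_sum_induced_char_cnj:
  assumes "q > 0" "d dvd q"
  shows "gauss_sum (q div d) n (\<lambda>k. cnj (induced_char (q div d) \<psi> k)) =
      (\<Sum>k\<in>totatives (q div d). cnj (\<psi> k) * unit_root q (int (k * d) * int n))"
proof -
  obtain r where r: "q = d * r"
    using assms(2) ..
  then have "d > 0" "q div d = r"
    using assms(1) by auto
  have "gauss_sum r n (\<lambda>k. cnj (induced_char r \<psi> k)) =
      (\<Sum>k=1..r. if coprime k r then cnj (\<psi> k) * unit_root q (int (k * d) * int n) else 0)"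
    unfolding gauss_sum_def using \<open>d > 0\<close>
    by (intro sum.cong refl) (simp add: induced_char_def principal_char_def unit_root_def r mult_ac)
  also have "\<dots> = (\<Sum>k\<in>{k\<in>{1..r}. coprime k r}. cnj (\<psi> k) * unit_root q (int (k * d) * int n))"
    by (rule sum.inter_filter [symmetric]) simp
  also have "{k\<in>{1..r}. coprime k r} = totatives r"
    by (auto simp: totatives_def)
  finally show ?thesis
    using \<open>q div d = r\<close> by simp
qed

lemma sum_totatives_finite_fourier:
  assumes q: "q > 0" and dc: "dirichlet_char q0 \<psi>"
    and per: "\<forall>n\<ge>1. f (n + q) = f n"
    and dil: "\<And>k n. coprime k q \<Longrightarrow> k > 0 \<Longrightarrow> n \<ge> 1 \<Longrightarrow>
      f (k * n) = \<psi> k * f n"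
    and "q0 dvd q" "d dvd q div q0"
  shows "(\<Sum>k\<in>totatives (q div d). finite_fourier q f (k * d) * unit_root q (int (k * d) * int n)) =
      finite_fourier q f d * gauss_sum (q div d) n (\<lambda>k. cnj (induced_char (q div d) \<psi> k))"
proof -
  have d: "d dvd q" "q0 dvd q div d"
    using assms(5,6) dvd_div_imp_dvd dvd_div_iff_dvd_div by blast+
  show ?thesis
    unfolding gauss_sum_induced_char_cnj [OF q d(1)] sum_distrib_left
    by (intro sum.cong refl)
      (simp add: finite_fourier_mult_coprime [OF q dc per dil d] in_totatives_iff)
qed

theorem lemma4p1:
  fixes q q0 :: nat and \<psi> f :: "nat \<Rightarrow> complex"
  assumes "q > 0" and "q0 dvd q"
    and "primitive_char q0 \<psi>"
    and "\<forall>n\<ge>1. f (n + q) = f n"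
    and "in_E q q0 \<psi> f"
  shows "\<forall>n\<ge>1. f n = (\<Sum>d | d dvd (q div q0).
            finite_fourier q f d *
            gauss_sum (q div d) n (\<lambda>k. cnj (induced_char (q div d) \<psi> k)))"
proof (intro allI impI)
  fix n :: nat
  assume "n \<ge> 1"
  note q = \<open>q > 0\<close> and per = \<open>\<forall>n\<ge>1. f (n + q) = f n\<close> and pc = \<open>primitive_char q0 \<psi>\<close>
  have dc: "dirichlet_char q0 \<psi>"
    using pc by (simp add: primitive_char_def)
  note dil = in_E_dilation [OF dc \<open>q0 dvd q\<close> \<open>in_E q q0 \<psi> f\<close>]
  define S where "S d = (\<Sum>k\<in>totatives (q div d).
      finite_fourier q f (k * d) * unit_root q (int (k * d) * int n))" for d
  have "f n = (\<Sum>m=1..q. finite_fourier q f m * unit_root q (int m * int n))"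
    by (rule finite_fourier_inversion [OF q per \<open>n \<ge> 1\<close>])
  also have "\<dots> = (\<Sum>d | d dvd q. S d)"
    unfolding S_def by (rule sum_atLeastAtMost_by_gcd [OF q])
  also have "\<dots> = (\<Sum>d | d dvd q div q0. S d)"
  proof (rule sum.mono_neutral_right)
    show "{d. d dvd q div q0} \<subseteq> {d. d dvd q}"
      using \<open>q0 dvd q\<close> dvd_div_imp_dvd by blast
    show "\<forall>d\<in>{d. d dvd q} - {d. d dvd q div q0}. S d = 0"
    proof
      fix d
      assume "d \<in> {d. d dvd q} - {d. d dvd q div q0}"
      then have "d dvd q" "\<not> q0 dvd q div d"
        using dvd_div_iff_dvd_div [OF \<open>q0 dvd q\<close>] by auto
      then show "S d = 0"
        unfolding S_def by (simp add: finite_fourier_eq_0_if_not_dvd [OF q pc per dil])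
    qed
  qed (use q in simp)
  also have "\<dots> = (\<Sum>d | d dvd q div q0.
      finite_fourier q f d * gauss_sum (q div d) n (\<lambda>k. cnj (induced_char (q div d) \<psi> k)))"
    unfolding S_def using sum_totatives_finite_fourier [OF q dc per dil \<open>q0 dvd q\<close>] by simp
  finally show "f n = \<dots>" .
qed

end
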